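(* Let $2\leq r\leq n$ be integers and $(s_2,\ldots,s_r)\in\mathbb{N}^{r-1}$. Then there exists an integer $N$ (depending on $n$ and $(s_2,\ldots,s_r)$) such that $\overline{H}_n(s_1,s_2,\ldots,s_r)$ is not an integer for every positive integer $s_1>N$.
   Context: $\mathbb{N}$ is the set of positive integers and $\overline{H}_n(s_1,\ldots,s_r)=\sum_{0\leq k_1<\cdots<k_r\leq n-1}\prod_{j=1}^r (2k_j+1)^{-s_j}$. *)

theory Defs
  imports Complex_Main
begin

definition idx_tuples :: "nat \<Rightarrow> nat \<Rightarrow> nat list set" where
  "idx_tuples n r = {ks. length ks = r \<and> sorted_wrt (<) ks \<and> (\<forall>k\<in>set ks. k < n)}"

definition Hbar :: "nat \<Rightarrow> nat list \<Rightarrow> real" where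
  "Hbar n ss = (\<Sum>ks\<in>idx_tuples n (length ss).
      \<Prod>j<length ss. 1 / (2 * real (ks ! j) + 1) ^ (ss ! j))"

end

theory Submission
  imports Defs
begin

text \<open>Split the index tuples according to whether k_1 = 0. The tuples with k_1 = 0 contribute a
  constant A, independent of s_1; every other tuple carries a factor (2 k_1 + 1)^(-s_1) with
  2 k_1 + 1 \<ge> 3, so their contribution E(s_1) is positive and tends to 0. Hence A + E(s_1) lies
  strictly between \<lfloor>A\<rfloor> and \<lfloor>A\<rfloor> + 1 for large s_1. When r < n such a tuple exists, e.g.
  (1,...,r); when r = n the only tuple is (0,...,n-1), and the sum is a product of factors
  in (0,1], the second of which, 3^(-s_2), is < 1.\<close>

lemma add_not_Ints_eventually:
  fixes a :: real and e :: "nat \<Rightarrow> real"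
  assumes "e \<longlonglongrightarrow> 0" and "\<And>s. 0 < e s"
  shows "\<forall>\<^sub>F s in sequentially. a + e s \<notin> \<int>"
proof -
  have "\<forall>\<^sub>F s in sequentially. e s < 1 - frac a"
    using assms(1) frac_lt_1[of a] by (intro order_tendstoD(2)) auto
  then show ?thesis
  proof (rule eventually_mono)
    fix s assume small: "e s < 1 - frac a"
    have "e s < 1"
      using small frac_ge_0[of a] by linarith
    then have "frac (e s) = e s"
      using assms(2)[of s] by (simp add: frac_eq_id)
    then have "frac (a + e s) = frac a + e s"
      using small by (simp add: frac_add)
    then show "a + e s \<notin> \<int>"
      using assms(2)[of s] frac_ge_0[of a] frac_gt_0_iff by (metis add_nonneg_pos)
  qed
qed

lemma sum_powers_not_Ints_eventually:
  fixes q w :: "'a \<Rightarrow> real"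
  assumes "finite T"
    and "\<And>x. x \<in> T \<Longrightarrow> 0 < q x" "\<And>x. x \<in> T \<Longrightarrow> q x \<le> 1" "\<And>x. x \<in> T \<Longrightarrow> 0 < w x"
    and "\<exists>x\<in>T. q x < 1"
  shows "\<forall>\<^sub>F s in sequentially. (\<Sum>x\<in>T. q x ^ s * w x) \<notin> \<int>"
proof -
  define T1 where "T1 = {x\<in>T. q x = 1}"
  define T' where "T' = {x\<in>T. q x < 1}"
  define E where "E s = (\<Sum>x\<in>T'. q x ^ s * w x)" for s :: nat
  have sum_split: "(\<Sum>x\<in>T. q x ^ s * w x) = (\<Sum>x\<in>T1. w x) + E s" for s
  proof -
    have "T = T1 \<union> T'" "T1 \<inter> T' = {}"
      using assms(3) by (auto simp: T1_def T'_def order.order_iff_strict)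
    then have "(\<Sum>x\<in>T. q x ^ s * w x) = (\<Sum>x\<in>T1. q x ^ s * w x) + E s"
      unfolding E_def using assms(1) by (simp add: sum.union_disjoint)
    then show ?thesis by (simp add: T1_def)
  qed
  have "E \<longlonglongrightarrow> 0"
    unfolding E_def
    by (intro tendsto_null_sum tendsto_mult_left_zero LIMSEQ_power_zero)
      (auto simp: T'_def assms(2) abs_of_pos)
  moreover have "0 < E s" for s
    unfolding E_def using assms
    by (intro sum_pos) (auto simp: T'_def intro!: mult_pos_pos zero_less_power)
  ultimately show ?thesis
    unfolding sum_split by (rule add_not_Ints_eventually)
qed

definition odd_prod :: "nat list \<Rightarrow> nat list \<Rightarrow> real" where
  "odd_prod ks ss = (\<Prod>j<length ss. 1 / (2 * real (ks ! j) + 1) ^ (ss ! j))"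

lemma Hbar_odd_prod: "Hbar n ss = (\<Sum>ks\<in>idx_tuples n (length ss). odd_prod ks ss)"
  by (simp add: Hbar_def odd_prod_def)

lemma odd_prod_Cons:
  "odd_prod (k # ks) (s # ss) = (1 / (2 * real k + 1)) ^ s * odd_prod ks ss"
  unfolding odd_prod_def length_Cons prod.lessThan_Suc_shift by (simp add: power_one_over)

lemma odd_prod_pos: "0 < odd_prod ks ss"
  unfolding odd_prod_def by (intro prod_pos) auto

lemma odd_prod_le_1: "odd_prod ks ss \<le> 1"
  unfolding odd_prod_def by (intro prod_le_1) (auto simp: divide_simps)

lemma odd_prod_less_1:
  assumes "0 < k" and "0 < s"
  shows "odd_prod (k # ks) (s # ss) < 1"
proof -
  have "(1 / (2 * real k + 1)) ^ s < 1"
    using assms by (simp add: power_less_one_iff)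
  then show ?thesis
    unfolding odd_prod_Cons using odd_prod_le_1[of ks ss]
    by (intro le_less_trans[OF mult_left_le]) simp_all
qed

lemma idx_tuples_self: "idx_tuples n n = {[0..<n]}"
proof (intro equalityI subsetI)
  fix ks assume "ks \<in> idx_tuples n n"
  then have ks: "length ks = n" "sorted_wrt (<) ks" "set ks \<subseteq> {..<n}"
    by (auto simp: idx_tuples_def)
  then have "card (set ks) = card {..<n}"
    by (simp add: distinct_card strict_sorted_iff)
  then have "set ks = set [0..<n]"
    using card_subset_eq[OF finite_lessThan ks(3)] by (simp add: lessThan_atLeast0)
  then show "ks \<in> {[0..<n]}"
    using ks(2) by (simp add: strict_sorted_equal sorted_wrt_upt)
qed (auto simp: idx_tuples_def sorted_wrt_upt)

lemma finite_idx_tuples: "finite (idx_tuples n r)"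
proof (rule finite_subset)
  show "idx_tuples n r \<subseteq> {ks. set ks \<subseteq> {..<n} \<and> length ks = r}"
    by (auto simp: idx_tuples_def)
qed (simp add: finite_lists_length_eq)

lemma Hbar_Cons:
  "Hbar n (s # ts) = (\<Sum>ks\<in>idx_tuples n (Suc (length ts)).
      (1 / (2 * real (hd ks) + 1)) ^ s * odd_prod (tl ks) ts)"
proof -
  have "ks = hd ks # tl ks" if "ks \<in> idx_tuples n (Suc (length ts))" for ks
    using that by (cases ks) (auto simp: idx_tuples_def)
  then show ?thesis
    unfolding Hbar_odd_prod by (intro sum.cong) (simp, metis odd_prod_Cons)
qed

lemma Hbar_full_not_Ints:
  assumes "Suc (length ts) = n" and "ts \<noteq> []" and "\<forall>t\<in>set ts. t \<ge> 1"
  shows "Hbar n (s # ts) \<notin> \<int>"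
proof -
  obtain t ts' where ts: "ts = t # ts'" and "0 < t"
    using assms(2,3) by (cases ts) auto
  have "1 < n"
    using assms(1) ts by simp
  then have "[1..<n] = 1 # [2..<n]"
    by (simp add: upt_conv_Cons numeral_2_eq_2)
  then have "0 < odd_prod [1..<n] ts" "odd_prod [1..<n] ts < 1"
    unfolding ts using \<open>0 < t\<close> by (simp_all add: odd_prod_pos odd_prod_less_1)
  moreover have "Hbar n (s # ts) = odd_prod [1..<n] ts"
    unfolding Hbar_Cons assms(1) idx_tuples_self using assms(1) by (simp add: tl_upt)
  ultimately show ?thesis
    by (simp add: frac_eq_id flip: frac_gt_0_iff)
qed

lemma Hbar_not_Ints_eventually:
  assumes "Suc (length ts) < n"
  shows "\<forall>\<^sub>F s in sequentially. Hbar n (s # ts) \<notin> \<int>"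
proof -
  let ?r = "Suc (length ts)"
  have "[1..<?r+1] \<in> idx_tuples n ?r"
    using assms by (auto simp del: upt_Suc simp: idx_tuples_def sorted_wrt_upt)
  moreover have "hd [1..<?r+1] = 1"
    by (simp add: upt_conv_Cons del: upt_Suc)
  ultimately have base_less_1: "\<exists>ks\<in>idx_tuples n ?r. 1 / (2 * real (hd ks) + 1) < 1"
    by force
  show ?thesis
    unfolding Hbar_Cons
    by (rule sum_powers_not_Ints_eventually[OF finite_idx_tuples _ _ _ base_less_1])
      (simp_all add: odd_prod_pos)
qed

theorem lemma2p8:
  fixes n r :: nat and ts :: "nat list"
  assumes "2 \<le> r" and "r \<le> n"
    and "length ts = r - 1"
    and "\<forall>t\<in>set ts. t \<ge> 1"
  shows "\<exists>N::nat. \<forall>s1::nat. s1 > N \<longrightarrow> Hbar n (s1 # ts) \<notin> \<int>"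
proof -
  have r: "r = Suc (length ts)" "ts \<noteq> []"
    using assms(1,3) by auto
  have "\<forall>\<^sub>F s in sequentially. Hbar n (s # ts) \<notin> \<int>"
  proof (cases "r = n")
    case True
    then show ?thesis
      using Hbar_full_not_Ints[of ts n] r assms(4) by simp
  next
    case False
    then show ?thesis
      using Hbar_not_Ints_eventually[of ts n] r assms(2) by simp
  qed
  then obtain N where "\<forall>s\<ge>N. Hbar n (s # ts) \<notin> \<int>"
    by (auto simp: eventually_sequentially)
  then show ?thesis
    by (auto intro: less_imp_le)
qed

end
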